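(* In the process algebra $\mathcal{G}$ described in the context, let $P\in\{D,C,C'\}$ and let $Q$ be a process with $P\Longrightarrow P\,\|\,Q$. Then $P\,\|\,Q\Longrightarrow P$.
   Context: Process algebras: a triple $(\mathcal{C},\mathcal{A},\Delta)$ of finitely many constants, actions (including silent $\tau$) and rules $X\stackrel{\ell}{\longrightarrow}P$. Processes: $P::=\epsilon\mid X\mid PP'\mid P\|P'$, sequential composition associative, parallel composition associative and commutative, $\epsilon$ a unit for both. Semantics: rules of $\Delta$; if $P\stackrel{\ell}{\longrightarrow}P'$ then $PQ\stackrel{\ell}{\longrightarrow}P'Q$, $P\|Q\stackrel{\ell}{\longrightarrow}P'\|Q$, $Q\|P\stackrel{\ell}{\longrightarrow}Q\|P'$. $\Longrightarrow$ is the reflexive transitive closure of $\stackrel{\tau}{\longrightarrow}$. The algebra $\mathcal{G}$: fix a finite alphabet $\Sigma$ with $|\Sigma|\ge2$ and a Post Correspondence instance $\mathrm{INST}=\{(u_1,v_1),\dots,(u_n,v_n)\}$ with $u_k,v_k\in\Sigma^{+}$; let $\mathcal{N}=\{1,\dots,n\}$. Actions: $\{\lambda_U,\lambda_V,\lambda_D,\lambda_I,\lambda_S,\lambda_Z\}\cup\mathcal{N}\cup\Sigma\cup\{\tau\}$. Constants: $X,Y,Z,I,S,C,C',D,G,G',G_u,G_v,G_v'$, $U_k,V_k$ ($k\in\mathcal{N}$), and $W(\omega,k),W(\omega,0)$ for $k\in\mathcal{N}$ and $\omega$ a (possibly empty) suffix of $u_k$ or of $v_k$; $\mathcal{W}$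 is the set of these $W$-constants. Rules (with $k$ ranging over $\mathcal{N}$, $a$ over $\Sigma$, $W$ over $\mathcal{W}$): $X\stackrel{\lambda_U}{\longrightarrow}D\|G_v$, $X\stackrel{\tau}{\longrightarrow}D$, $Y\stackrel{\tau}{\longrightarrow}D$, $D\stackrel{\tau}{\longrightarrow}D\|G_u$, $D\stackrel{\lambda_D}{\longrightarrow}C$; $G_u\stackrel{\tau}{\longrightarrow}G_uU_k$, $G_u\stackrel{\lambda_U}{\longrightarrow}G_vU_k$, $G_u\stackrel{\tau}{\longrightarrow}G_v'$, $G_v'\stackrel{\tau}{\longrightarrow}G_v'V_k$, $G_v'\stackrel{\tau}{\longrightarrow}Z$; $G_v\stackrel{\tau}{\longrightarrow}G_vV_k$, $G_v\stackrel{\tau}{\longrightarrow}\epsilon$, $G_v\stackrel{\lambda_V}{\longrightarrow}Z$, $Z\stackrel{\tau}{\longrightarrow}\epsilon$, $Z\stackrel{\lambda_Z}{\longrightarrow}\epsilon$; $C\stackrel{\lambda_I}{\longrightarrow}I$, $C\stackrel{\lambda_S}{\longrightarrow}S$, $C\stackrel{\tau}{\longrightarrow}C\|G$, $C\stackrel{\tau}{\longrightarrow}C\|G_v$; $G\stackrel{\tau}{\longrightarrow}GU_k$, $G\stackrel{\tau}{\longrightarrow}GV_k$, $G\stackrel{\tau}{\longrightarrow}\epsilon$; $I\stackrel{\lambda_I}{\longrightarrow}C'$, $I\stackrel{k}{\longrightarrow}I$, $S\stackrel{\lambda_S}{\longrightarrow}C'$, $S\stackrel{a}{\longrightarrow}S$,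 $C'\stackrel{\tau}{\longrightarrow}C'\|G'$, $C'\stackrel{\tau}{\longrightarrow}\epsilon$; $G'\stackrel{\tau}{\longrightarrow}G'U_k$, $G'\stackrel{\tau}{\longrightarrow}G'V_k$, $G'\stackrel{\tau}{\longrightarrow}G'W$, $G'\stackrel{\tau}{\longrightarrow}G_v$, $G'\stackrel{\tau}{\longrightarrow}Z$; $U_k\stackrel{\tau}{\longrightarrow}W(u_k,k)$, $V_k\stackrel{\tau}{\longrightarrow}W(v_k,k)$; $W(a\omega,k)\stackrel{a}{\longrightarrow}W(\omega,k)$, $W(a\omega,0)\stackrel{a}{\longrightarrow}W(\omega,0)$, $W(\omega,k)\stackrel{k}{\longrightarrow}W(\omega,0)$, $W(a\omega,k)\stackrel{\tau}{\longrightarrow}W(\omega,k)$, $W(a\omega,0)\stackrel{\tau}{\longrightarrow}W(\omega,0)$, $W(\omega,k)\stackrel{\tau}{\longrightarrow}W(\omega,0)$, $W(\epsilon,0)\stackrel{\tau}{\longrightarrow}\epsilon$. *)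

theory Defs
  imports Main "HOL-Library.Sublist"
begin

text \<open>A PCP instance is a list ins of pairs; pair number k (1 \<le> k \<le> n,
n = length ins) is ins ! (k - 1). The index 0 in W \<omega> 0 is the special index 0.\<close>

datatype 'a gconst =
    cX | cY | cZ | cI | cS | cC | cC' | cD | cG | cG' | cGu | cGv | cGv'
  | cU nat | cV nat | cW "'a list" nat

datatype 'a gact = lU | lV | lD | lI | lS | lZ | aIdx nat | aSym 'a | tau

datatype 'a proc = Eps | Cst "'a gconst" | Seq "'a proc" "'a proc" | Par "'a proc" "'a proc"

definition uw :: "('a list \<times> 'a list) list \<Rightarrow> nat \<Rightarrow> 'a list" where
  "uw ins k = fst (ins ! (k - 1))"
definition vw :: "('a list \<times> 'a list) list \<Rightarrow> nat \<Rightarrow> 'a list" where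
  "vw ins k = snd (ins ! (k - 1))"

definition idx :: "('a list \<times> 'a list) list \<Rightarrow> nat set" where
  "idx ins = {1..length ins}"

fun valid_const :: "('a list \<times> 'a list) list \<Rightarrow> 'a gconst \<Rightarrow> bool" where
  "valid_const ins (cU k) = (k \<in> idx ins)"
| "valid_const ins (cV k) = (k \<in> idx ins)"
| "valid_const ins (cW w k) =
     (if k = 0 then (\<exists>j \<in> idx ins. suffix w (uw ins j) \<or> suffix w (vw ins j))
      else k \<in> idx ins \<and> (suffix w (uw ins k) \<or> suffix w (vw ins k)))"
| "valid_const ins _ = True"

fun consts_of :: "'a proc \<Rightarrow> 'a gconst set" where
  "consts_of Eps = {}"
| "consts_of (Cst c) = {c}"
| "consts_of (Seq p q) = consts_of p \<union> consts_of q"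
| "consts_of (Par p q) = consts_of p \<union> consts_of q"

definition is_proc :: "('a list \<times> 'a list) list \<Rightarrow> 'a proc \<Rightarrow> bool" where
  "is_proc ins p = (\<forall>c \<in> consts_of p. valid_const ins c)"

inductive scong :: "'a proc \<Rightarrow> 'a proc \<Rightarrow> bool" where
  refl: "scong p p"
| sym: "scong p q \<Longrightarrow> scong q p"
| trans: "scong p q \<Longrightarrow> scong q r \<Longrightarrow> scong p r"
| seq_assoc: "scong (Seq (Seq p q) r) (Seq p (Seq q r))"
| par_assoc: "scong (Par (Par p q) r) (Par p (Par q r))"
| par_comm: "scong (Par p q) (Par q p)"
| seq_unitl: "scong (Seq Eps p) p"
| seq_unitr: "scong (Seq p Eps) p"
| par_unit: "scong (Par Eps p) p"
| seq_cong: "scong p p' \<Longrightarrow> scong q q' \<Longrightarrow> scong (Seq p q) (Seq p' q')"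
| par_cong: "scong p p' \<Longrightarrow> scong q q' \<Longrightarrow> scong (Par p q) (Par p' q')"

abbreviation seqs :: "'a gconst list \<Rightarrow> 'a proc" where
  "seqs cs \<equiv> foldr (\<lambda>c p. Seq (Cst c) p) cs Eps"

inductive delta :: "('a list \<times> 'a list) list \<Rightarrow> 'a gconst \<Rightarrow> 'a gact \<Rightarrow> 'a proc \<Rightarrow> bool"
  for ins where
  "delta ins cX lU (Par (Cst cD) (Cst cGv))"
| "delta ins cX tau (Cst cD)"
| "delta ins cY tau (Cst cD)"
| "delta ins cD tau (Par (Cst cD) (Cst cGu))"
| "delta ins cD lD (Cst cC)"
| "k \<in> idx ins \<Longrightarrow> delta ins cGu tau (Seq (Cst cGu) (Cst (cU k)))"
| "k \<in> idx ins \<Longrightarrow> delta ins cGu lU (Seq (Cst cGv) (Cst (cU k)))"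
| "delta ins cGu tau (Cst cGv')"
| "k \<in> idx ins \<Longrightarrow> delta ins cGv' tau (Seq (Cst cGv') (Cst (cV k)))"
| "delta ins cGv' tau (Cst cZ)"
| "k \<in> idx ins \<Longrightarrow> delta ins cGv tau (Seq (Cst cGv) (Cst (cV k)))"
| "delta ins cGv tau Eps"
| "delta ins cGv lV (Cst cZ)"
| "delta ins cZ tau Eps"
| "delta ins cZ lZ Eps"
| "delta ins cC lI (Cst cI)"
| "delta ins cC lS (Cst cS)"
| "delta ins cC tau (Par (Cst cC) (Cst cG))"
| "delta ins cC tau (Par (Cst cC) (Cst cGv))"
| "k \<in> idx ins \<Longrightarrow> delta ins cG tau (Seq (Cst cG) (Cst (cU k)))"
| "k \<in> idx ins \<Longrightarrow> delta ins cG tau (Seq (Cst cG) (Cst (cV k)))"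
| "delta ins cG tau Eps"
| "delta ins cI lI (Cst cC')"
| "k \<in> idx ins \<Longrightarrow> delta ins cI (aIdx k) (Cst cI)"
| "delta ins cS lS (Cst cC')"
| "delta ins cS (aSym a) (Cst cS)"
| "delta ins cC' tau (Par (Cst cC') (Cst cG'))"
| "delta ins cC' tau Eps"
| "k \<in> idx ins \<Longrightarrow> delta ins cG' tau (Seq (Cst cG') (Cst (cU k)))"
| "k \<in> idx ins \<Longrightarrow> delta ins cG' tau (Seq (Cst cG') (Cst (cV k)))"
| "valid_const ins (cW w j) \<Longrightarrow> delta ins cG' tau (Seq (Cst cG') (Cst (cW w j)))"
| "delta ins cG' tau (Cst cGv)"
| "delta ins cG' tau (Cst cZ)"
| "k \<in> idx ins \<Longrightarrow> delta ins (cU k) tau (Cst (cW (uw ins k) k))"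
| "k \<in> idx ins \<Longrightarrow> delta ins (cV k) tau (Cst (cW (vw ins k) k))"
| "k \<in> idx ins \<Longrightarrow> valid_const ins (cW (a # w) k) \<Longrightarrow>
     delta ins (cW (a # w) k) (aSym a) (Cst (cW w k))"
| "valid_const ins (cW (a # w) 0) \<Longrightarrow> delta ins (cW (a # w) 0) (aSym a) (Cst (cW w 0))"
| "k \<in> idx ins \<Longrightarrow> valid_const ins (cW w k) \<Longrightarrow>
     delta ins (cW w k) (aIdx k) (Cst (cW w 0))"
| "k \<in> idx ins \<Longrightarrow> valid_const ins (cW (a # w) k) \<Longrightarrow>
     delta ins (cW (a # w) k) tau (Cst (cW w k))"
| "valid_const ins (cW (a # w) 0) \<Longrightarrow> delta ins (cW (a # w) 0) tau (Cst (cW w 0))"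
| "k \<in> idx ins \<Longrightarrow> valid_const ins (cW w k) \<Longrightarrow>
     delta ins (cW w k) tau (Cst (cW w 0))"
| "valid_const ins (cW [] 0) \<Longrightarrow> delta ins (cW [] 0) tau Eps"

inductive step :: "('a list \<times> 'a list) list \<Rightarrow> 'a proc \<Rightarrow> 'a gact \<Rightarrow> 'a proc \<Rightarrow> bool"
  for ins where
  rule: "delta ins c l p \<Longrightarrow> step ins (Cst c) l p"
| seq: "step ins p l p' \<Longrightarrow> step ins (Seq p q) l (Seq p' q)"
| parl: "step ins p l p' \<Longrightarrow> step ins (Par p q) l (Par p' q)"
| parr: "step ins p l p' \<Longrightarrow> step ins (Par q p) l (Par q p')"
| cong: "scong p p1 \<Longrightarrow> step ins p1 l p2 \<Longrightarrow> scong p2 p' \<Longrightarrow> step ins p l p'"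

text \<open>P ==> P' : reflexive transitive closure of tau steps.\<close>
definition tau_steps :: "('a list \<times> 'a list) list \<Rightarrow> 'a proc \<Rightarrow> 'a proc \<Rightarrow> bool" where
  "tau_steps ins = (\<lambda>p q. step ins p tau q)\<^sup>*\<^sup>*"

end

theory Submission
  imports Defs
begin

text \<open>Every process \<open>\<tau>\<close>-reachable from \<open>P = c\<^sub>0\<close> (\<open>c\<^sub>0 \<in> {D, C, C'}\<close>) is, up to
structural congruence, either built from erasable constants only (all constants except
\<open>X, Y, D, C, I, S\<close>) or a single copy of \<open>c\<^sub>0\<close> in a context of erasable constants.
Erasable constants \<open>\<tau>\<close>-reduce to \<open>\<epsilon>\<close>, so \<open>Q\<close> can be erased; letting \<open>P\<close> first spawn one more
erasable component turns the resulting reduction into one ending exactly at \<open>P\<close>.\<close>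

definition erasable_const :: "('a list \<times> 'a list) list \<Rightarrow> 'a gconst \<Rightarrow> bool" where
  "erasable_const ins c \<longleftrightarrow> valid_const ins c \<and> c \<notin> {cX, cY, cD, cC, cI, cS}"

definition erasable :: "('a list \<times> 'a list) list \<Rightarrow> 'a proc \<Rightarrow> bool" where
  "erasable ins p \<longleftrightarrow> (\<forall>c \<in> consts_of p. erasable_const ins c)"

text \<open>The \<open>Seq\<close> case allows a constant-free right part because \<open>Seq p Eps\<close> is congruent to \<open>p\<close>,
while a non-trivial continuation of \<open>c\<^sub>0\<close> could never be reached.\<close>
fun sole_copy :: "('a list \<times> 'a list) list \<Rightarrow> 'a gconst \<Rightarrow> 'a proc \<Rightarrow> bool" where
  "sole_copy ins c0 Eps = False"
| "sole_copy ins c0 (Cst c) = (c = c0)"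
| "sole_copy ins c0 (Seq p q) =
     (erasable ins p \<and> sole_copy ins c0 q \<or> sole_copy ins c0 p \<and> consts_of q = {})"
| "sole_copy ins c0 (Par p q) =
     (erasable ins p \<and> sole_copy ins c0 q \<or> sole_copy ins c0 p \<and> erasable ins q)"

lemma scong_consts_of_eq: "scong p q \<Longrightarrow> consts_of p = consts_of q"
  by (induction rule: scong.induct) auto

lemma scong_erasable_iff: "scong p q \<Longrightarrow> erasable ins p \<longleftrightarrow> erasable ins q"
  unfolding erasable_def by (metis scong_consts_of_eq)

lemma scong_sole_copy_iff: "scong p q \<Longrightarrow> sole_copy ins c0 p \<longleftrightarrow> sole_copy ins c0 q"
proof (induction rule: scong.induct)
  case (seq_cong p p' q q')
  then show ?case by (metis sole_copy.simps(3) scong_erasable_iff scong_consts_of_eq)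
next
  case (par_cong p p' q q')
  then show ?case by (metis sole_copy.simps(4) scong_erasable_iff)
qed (auto simp: erasable_def)

lemma sole_copy_imp_erasable:
  "sole_copy ins c0 p \<Longrightarrow> erasable_const ins c0 \<Longrightarrow> erasable ins p"
  by (induction p) (auto simp: erasable_def)

lemma delta_tau_erasable:
  "delta ins c tau p \<Longrightarrow> erasable_const ins c \<Longrightarrow> erasable ins p"
  by (induction c "tau :: 'a gact" p rule: delta.induct)
     (auto simp: erasable_def erasable_const_def idx_def dest: suffix_ConsD)

lemma delta_tau_generator:
  "delta ins c tau p \<Longrightarrow> c \<in> {cD, cC, cC'} \<Longrightarrow> sole_copy ins c p \<or> erasable ins p"
  by (erule delta.cases) (auto simp: erasable_def erasable_const_def)

lemma generator_spawns_erasable: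
  assumes "c0 \<in> {cD, cC, cC'}"
  obtains R where "delta ins c0 tau (Par (Cst c0) R)" and "erasable ins R"
proof -
  from assms consider "c0 = cD" | "c0 = cC" | "c0 = cC'" by blast
  then show thesis
  proof cases
    case 1
    then show thesis by (intro that[of "Cst cGu"]) (auto intro: delta.intros
        simp: erasable_def erasable_const_def)
  next
    case 2
    then show thesis by (intro that[of "Cst cG"]) (auto intro: delta.intros
        simp: erasable_def erasable_const_def)
  next
    case 3
    then show thesis by (intro that[of "Cst cG'"]) (auto intro: delta.intros
        simp: erasable_def erasable_const_def)
  qed
qed

lemma step_tau_invariant:
  assumes "step ins p l p'" and "l = tau" and "c0 \<in> {cD, cC, cC'}"
  shows "(erasable ins p \<longrightarrow> erasable ins p') \<and>
    (sole_copy ins c0 p \<longrightarrow> sole_copy ins c0 p' \<or> erasable ins p')"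
  using assms
proof (induction rule: step.induct)
  case (rule c l p)
  then show ?case
    using delta_tau_erasable[of ins c p] delta_tau_generator[of ins c p]
    by (auto simp: erasable_def)
next
  case (cong p p1 l p2 p')
  then show ?case by (metis scong_erasable_iff scong_sole_copy_iff)
qed (auto simp: erasable_def)

lemma tau_steps_invariant:
  assumes "tau_steps ins p p'" and "c0 \<in> {cD, cC, cC'}"
    and "erasable ins p \<or> sole_copy ins c0 p"
  shows "erasable ins p' \<or> sole_copy ins c0 p'"
  using assms unfolding tau_steps_def
  by (induction rule: rtranclp_induct) (use step_tau_invariant in blast)+

lemma tau_steps_lift_seq: "tau_steps ins p p' \<Longrightarrow> tau_steps ins (Seq p q) (Seq p' q)"
  unfolding tau_steps_def
  by (induction rule: rtranclp_induct) (auto intro: rtranclp.rtrancl_into_rtrancl step.seq)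

lemma tau_steps_lift_par: "tau_steps ins p p' \<Longrightarrow> tau_steps ins (Par q p) (Par q p')"
  unfolding tau_steps_def
  by (induction rule: rtranclp_induct) (auto intro: rtranclp.rtrancl_into_rtrancl step.parr)

lemma tau_steps_scong_source:
  assumes "tau_steps ins b c" and "scong a b"
  shows "\<exists>c'. tau_steps ins a c' \<and> scong c' c"
  using assms unfolding tau_steps_def
proof (induction rule: rtranclp_induct)
  case (step y z)
  then obtain c' where "(\<lambda>p q. step ins p tau q)\<^sup>*\<^sup>* a c'" and "scong c' y" by blast
  moreover have "step ins c' tau z" using step.cong[OF \<open>scong c' y\<close> step(2) scong.refl] .
  ultimately show ?case by (meson rtranclp.rtrancl_into_rtrancl scong.refl)
qed blast

text \<open>\<open>\<tau>\<close>-reachability modulo structural congruence. It is not contained in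
\<open>tau_steps\<close>: a reduction of length zero cannot absorb a trailing congruence.\<close>
definition tau_steps_scong :: "('a list \<times> 'a list) list \<Rightarrow> 'a proc \<Rightarrow> 'a proc \<Rightarrow> bool" where
  "tau_steps_scong ins p q \<longleftrightarrow> (\<exists>q'. tau_steps ins p q' \<and> scong q' q)"

lemma tau_steps_scong_if_tau_steps: "tau_steps ins p q \<Longrightarrow> tau_steps_scong ins p q"
  unfolding tau_steps_scong_def using scong.refl by blast

lemma tau_steps_scong_if_scong: "scong p q \<Longrightarrow> tau_steps_scong ins p q"
  unfolding tau_steps_scong_def tau_steps_def by blast

lemma tau_steps_scong_trans:
  assumes "tau_steps_scong ins a b" and "tau_steps_scong ins b c"
  shows "tau_steps_scong ins a c"
proof -
  obtain b' c' where "tau_steps ins a b'" "scong b' b" "tau_steps ins b c'" "scong c' c"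
    using assms unfolding tau_steps_scong_def by blast
  moreover from this obtain c'' where "tau_steps ins b' c''" "scong c'' c'"
    using tau_steps_scong_source by blast
  ultimately show ?thesis
    unfolding tau_steps_scong_def tau_steps_def by (meson rtranclp_trans scong.trans)
qed

lemma tau_steps_scong_lift_seq:
  "tau_steps_scong ins p p' \<Longrightarrow> tau_steps_scong ins (Seq p q) (Seq p' q)"
  unfolding tau_steps_scong_def using tau_steps_lift_seq scong.seq_cong scong.refl by blast

lemma tau_steps_scong_lift_par:
  "tau_steps_scong ins p p' \<Longrightarrow> tau_steps_scong ins (Par q p) (Par q p')"
  unfolding tau_steps_scong_def using tau_steps_lift_par scong.par_cong scong.refl by blast

lemma tau_steps_if_tau_step_tau_steps_scong:
  assumes "step ins a tau b" and "tau_steps_scong ins b c"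
  shows "tau_steps ins a c"
proof -
  obtain b' where "(\<lambda>p q. step ins p tau q)\<^sup>*\<^sup>* b b'" and "scong b' c"
    using assms(2) unfolding tau_steps_scong_def tau_steps_def by blast
  then have "(\<lambda>p q. step ins p tau q)\<^sup>+\<^sup>+ a b'"
    using assms(1) by (meson rtranclp_into_tranclp2)
  then have "(\<lambda>p q. step ins p tau q)\<^sup>+\<^sup>+ a c"
    using \<open>scong b' c\<close>
    by (cases rule: tranclp.cases) (meson scong.refl step.cong tranclp.intros)+
  then show ?thesis unfolding tau_steps_def by (rule tranclp_into_rtranclp)
qed

lemma tau_steps_if_delta: "delta ins c tau p \<Longrightarrow> tau_steps ins (Cst c) p"
  unfolding tau_steps_def by (meson r_into_rtranclp step.rule)

lemma tau_steps_delta_trans: "delta ins c tau p \<Longrightarrow> tau_steps ins p q \<Longrightarrow> tau_steps ins (Cst c) q"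
  unfolding tau_steps_def by (meson converse_rtranclp_into_rtranclp step.rule)

lemma tau_steps_W0_Eps: "valid_const ins (cW w 0) \<Longrightarrow> tau_steps ins (Cst (cW w 0)) Eps"
proof (induction w)
  case Nil
  then show ?case by (meson tau_steps_if_delta delta.intros)
next
  case (Cons a w)
  then have "valid_const ins (cW w 0)" by (auto dest: suffix_ConsD)
  with Cons show ?case by (meson tau_steps_delta_trans delta.intros)
qed

lemma tau_steps_W_Eps:
  assumes "valid_const ins (cW w k)"
  shows "tau_steps ins (Cst (cW w k)) Eps"
proof (cases "k = 0")
  case True
  with assms show ?thesis by (simp add: tau_steps_W0_Eps)
next
  case False
  with assms have "k \<in> idx ins" and "valid_const ins (cW w 0)" by auto
  with assms show ?thesis by (meson tau_steps_W0_Eps tau_steps_delta_trans delta.intros)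
qed

lemma tau_steps_Z_Eps: "tau_steps ins (Cst cZ) Eps"
  by (meson tau_steps_if_delta delta.intros)

lemma tau_steps_Gv'_Eps: "tau_steps ins (Cst cGv') Eps"
  by (meson tau_steps_delta_trans tau_steps_Z_Eps delta.intros)

lemma tau_steps_erasable_const_Eps:
  assumes "erasable_const ins c"
  shows "tau_steps ins (Cst c) Eps"
proof (cases c)
  case (cU k)
  with assms have "k \<in> idx ins" by (simp add: erasable_const_def)
  moreover from this have "valid_const ins (cW (uw ins k) k)" by (simp add: idx_def)
  ultimately show ?thesis using cU by (meson tau_steps_W_Eps tau_steps_delta_trans delta.intros)
next
  case (cV k)
  with assms have "k \<in> idx ins" by (simp add: erasable_const_def)
  moreover from this have "valid_const ins (cW (vw ins k) k)" by (simp add: idx_def)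
  ultimately show ?thesis using cV by (meson tau_steps_W_Eps tau_steps_delta_trans delta.intros)
next
  case (cW w k)
  with assms show ?thesis by (simp add: erasable_const_def tau_steps_W_Eps)
qed (use assms in \<open>auto simp: erasable_const_def
    intro: tau_steps_if_delta tau_steps_delta_trans[OF _ tau_steps_Z_Eps]
      tau_steps_delta_trans[OF _ tau_steps_Gv'_Eps] delta.intros\<close>)

lemma tau_steps_scong_erasable_Eps: "erasable ins p \<Longrightarrow> tau_steps_scong ins p Eps"
proof (induction p)
  case Eps
  then show ?case by (simp add: tau_steps_scong_if_scong scong.refl)
next
  case (Cst c)
  then show ?case
    by (simp add: erasable_def tau_steps_erasable_const_Eps tau_steps_scong_if_tau_steps)
next
  case (Seq p q)
  then have "tau_steps_scong ins (Seq p q) (Seq Eps q)" and "tau_steps_scong ins q Eps"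
    by (simp_all add: erasable_def tau_steps_scong_lift_seq)
  then show ?case
    by (meson tau_steps_scong_trans tau_steps_scong_if_scong scong.seq_unitl)
next
  case (Par p q)
  then have "tau_steps_scong ins (Par p q) (Par p Eps)" and "tau_steps_scong ins p Eps"
    by (simp_all add: erasable_def tau_steps_scong_lift_par)
  moreover have "scong (Par p Eps) p"
    by (meson scong.par_comm scong.par_unit scong.trans)
  ultimately show ?case
    by (meson tau_steps_scong_trans tau_steps_scong_if_scong)
qed

theorem lemma4:
  fixes ins :: "('a::finite list \<times> 'a list) list" and P Q :: "'a proc"
  assumes "card (UNIV :: 'a set) \<ge> 2"
    and "\<forall>(u, v) \<in> set ins. u \<noteq> [] \<and> v \<noteq> []"
    and "P \<in> {Cst cD, Cst cC, Cst cC'}"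
    and "is_proc ins Q"
    and "tau_steps ins P (Par P Q)"
  shows "tau_steps ins (Par P Q) P"
proof -
  obtain c0 where P: "P = Cst c0" and c0: "c0 \<in> {cD, cC, cC'}" using assms(3) by blast
  then obtain R where spawn: "delta ins c0 tau (Par P R)" and "erasable ins R"
    using generator_spawns_erasable by metis
  have "erasable ins (Par P Q) \<or> sole_copy ins c0 (Par P Q)"
    using tau_steps_invariant[OF assms(5) c0] P by simp
  with P c0 have "erasable ins Q"
    using sole_copy_imp_erasable by (auto simp: erasable_def erasable_const_def)
  have "step ins (Par P Q) tau (Par P (Par R Q))"
    using step.parl[OF step.rule[OF spawn[unfolded P]]] scong.par_assoc scong.refl
    by (metis P step.cong)
  moreover have "tau_steps_scong ins (Par P (Par R Q)) P"
  proof -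
    have "erasable ins (Par R Q)"
      using \<open>erasable ins R\<close> \<open>erasable ins Q\<close> unfolding erasable_def by auto
    then have "tau_steps_scong ins (Par P (Par R Q)) (Par P Eps)"
      by (simp add: tau_steps_scong_erasable_Eps tau_steps_scong_lift_par)
    then show ?thesis
      by (meson tau_steps_scong_trans tau_steps_scong_if_scong scong.par_comm scong.par_unit
          scong.trans)
  qed
  ultimately show ?thesis by (rule tau_steps_if_tau_step_tau_steps_scong)
qed

end
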